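(* For repeated non-credible second-price auctions with known credibility $\alpha_0$ and unknown distribution $G$, there exists a constant $c>0$ such that $$\inf_{\pi}\sup_{G}\mathrm{Regret}(\pi)\ge c\cdot(1-\alpha_0)\sqrt{T},$$ and this holds even in the special case where $v_t\equiv1$ for all $t$ and the feedback is full feedback.
   Context: Setting: rounds $t=1,\dots,T$; values $v_t\in[0,1]$ i.i.d. from a distribution $F$; highest competing bids $d_t\in\mathbb{R}_+$ i.i.d. from a distribution $G$ (CDF $G$), independent of the values. The bidder bids $b_t\ge0$; $x_t=\mathbb{I}\{b_t\ge d_t\}$; if she wins she pays $p_t=\alpha_0d_t+(1-\alpha_0)b_t$ with fixed $\alpha_0\in[0,1]$; cost $c_t=x_tp_t$, reward $r_t=x_tv_t-c_t$. Full feedback: before round $t$ the bidder knows $(v_s,x_s,p_s)_{s=1}^{t-1}$. The infimum is over bidding strategies $\pi$, which may use $\alpha_0$ but not $G$, and the supremum over distributions $G$ (supported on $[0,1]$). Define $r(v,b,\alpha)=(v-b)G(b)+\alpha\int_0^bG(y)\,dy$, $b^*(v,\alpha)=\arg\max_b r(v,b,\alpha)$ (largest maximizer in case of ties), and $\mathrm{Regret}(\pi)=\mathbb{E}\big[\sum_{t=1}^T r(v_t,b^*(v_t,\alpha_0),\alpha_0)-\sum_{t=1}^T r(v_t,b_t^\pi,\alpha_0)\big]$. *)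

theory Defs
  imports "HOL-Probability.Probability"
begin

definition cdfG :: "real measure \<Rightarrow> real \<Rightarrow> real" where
  "cdfG G b = measure G {..b}"

definition rew :: "real measure \<Rightarrow> real \<Rightarrow> real \<Rightarrow> real \<Rightarrow> real" where
  "rew G v b \<alpha> = (v - b) * cdfG G b + \<alpha> * integral {0..b} (\<lambda>y. cdfG G y)"

definition bstar :: "real measure \<Rightarrow> real \<Rightarrow> real \<Rightarrow> real" where
  "bstar G v \<alpha> = (GREATEST b. 0 \<le> b \<and> (\<forall>b'\<ge>0. rew G v b' \<alpha> \<le> rew G v b \<alpha>))"

text \<open>The bid in round t
  (rounds indexed 0..T-1) is  pi t (u, d)  where u is an independent uniform
  random seed in [0,1] and d is the sequence of highest competing bids; the bid may
  only depend on d s for s < t (full feedback), must be nonnegative and measurable.\<close>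
definition admissible_strategy :: "(nat \<Rightarrow> real \<times> (nat \<Rightarrow> real) \<Rightarrow> real) \<Rightarrow> bool" where
  "admissible_strategy \<pi> \<longleftrightarrow>
     (\<forall>t. \<pi> t \<in> borel_measurable (borel \<Otimes>\<^sub>M PiM UNIV (\<lambda>_::nat. borel)))
   \<and> (\<forall>t u d. 0 \<le> \<pi> t (u, d))
   \<and> (\<forall>t u d d'. (\<forall>s<t. d s = d' s) \<longrightarrow> \<pi> t (u, d) = \<pi> t (u, d'))"

definition comp_dists :: "real measure set" where
  "comp_dists = {G. prob_space G \<and> sets G = sets borel \<and> measure G {0..1} = 1}"

definition env :: "real measure \<Rightarrow> (real \<times> (nat \<Rightarrow> real)) measure" where
  "env G = uniform_measure lborel {0..1} \<Otimes>\<^sub>M PiM UNIV (\<lambda>_::nat. G)"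

text \<open>Regret with values v_t = 1.  The per-round gap is nonnegative (b* maximises r),
  so the expectation is taken as a nonnegative (ennreal) integral.\<close>
definition regret :: "(nat \<Rightarrow> real \<times> (nat \<Rightarrow> real) \<Rightarrow> real) \<Rightarrow> real measure \<Rightarrow> real \<Rightarrow> nat \<Rightarrow> ennreal" where
  "regret \<pi> G \<alpha> T = (\<Sum>t<T. \<integral>\<^sup>+ \<omega>. ennreal (rew G 1 (bstar G 1 \<alpha>) \<alpha> - rew G 1 (\<pi> t \<omega>) \<alpha>) \<partial>env G)"

end

theory Submission
  imports Defs
begin

text \<open>Let \<open>G\<^sub>p\<close> put mass \<open>p\<close> on the competing bid 0 and \<open>1 - p\<close> on 1/2. With value 1,
  a bid \<open>b < 1/2\<close> earns \<open>p - (1 - \<alpha>) p b\<close> and a bid \<open>b \<ge> 1/2\<close> earns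
  \<open>1/2 + \<alpha> p / 2 - (1 - \<alpha>) (b - 1/2)\<close>, so the optimal bid jumps from 1/2 to 0 as \<open>p\<close>
  crosses \<open>p\<^sup>* = 1 / (2 - \<alpha>)\<close>, and a bid on the wrong side of 1/2 loses at least
  \<open>|p - p\<^sup>*| / 2\<close>. Take \<open>p = p\<^sup>* \<plusminus> \<epsilon>\<close> with \<open>\<epsilon> = (1 - \<alpha>) / (8 \<surd>T)\<close>. The bid of round
  \<open>t\<close> is a test between the laws of the first \<open>t\<close> competing bids under the two instances,
  so by Le Cam's inequality its two error probabilities add up to at least \<open>\<rho>\<^sup>2\<^sup>t / 2\<close>, where
  \<open>\<rho> \<ge> 1 - 1 / (16 T)\<close> is the Bhattacharyya coefficient of the two instances. Hence the two
  regrets add up to at least \<open>T \<epsilon> / 8\<close>, and one of them is at least \<open>(1 - \<alpha>) \<surd>T / 128\<close>.\<close>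

lemma real_sqrt_prod: "sqrt (\<Prod>i\<in>A. f i) = (\<Prod>i\<in>A. sqrt (f i :: real))"
  by (induction A rule: infinite_finite_induct) (auto simp: real_sqrt_mult)

lemma sum_sqrt_mult_sq_le_overlap:
  fixes A B :: "'a \<Rightarrow> real"
  assumes A0: "\<And>x. x \<in> X \<Longrightarrow> 0 \<le> A x" and B0: "\<And>x. x \<in> X \<Longrightarrow> 0 \<le> B x"
    and A1: "sum A X = 1" and B1: "sum B X = 1"
  shows "(\<Sum>x\<in>X. sqrt (A x * B x))\<^sup>2 \<le> 2 * (\<Sum>x\<in>X. min (A x) (B x))"
proof -
  have "sqrt (A x * B x) = sqrt (min (A x) (B x)) * sqrt (max (A x) (B x))" for x
    by (simp add: real_sqrt_mult[symmetric] min_def max_def mult.commute)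
  then have "(\<Sum>x\<in>X. sqrt (A x * B x))\<^sup>2
      \<le> (\<Sum>x\<in>X. (sqrt (min (A x) (B x)))\<^sup>2) * (\<Sum>x\<in>X. (sqrt (max (A x) (B x)))\<^sup>2)"
    by (simp only: Cauchy_Schwarz_ineq_sum)
  also have "\<dots> = (\<Sum>x\<in>X. min (A x) (B x)) * (\<Sum>x\<in>X. max (A x) (B x))"
    using A0 B0 by (intro arg_cong2[where f = "(*)"] sum.cong) (auto simp: le_max_iff_disj)
  also have "\<dots> \<le> (\<Sum>x\<in>X. min (A x) (B x)) * 2"
  proof (rule mult_left_mono)
    have "(\<Sum>x\<in>X. max (A x) (B x)) \<le> (\<Sum>x\<in>X. A x + B x)"
      using A0 B0 by (intro sum_mono) auto
    then show "(\<Sum>x\<in>X. max (A x) (B x)) \<le> 2"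
      using A1 B1 by (simp add: sum.distrib)
    show "0 \<le> (\<Sum>x\<in>X. min (A x) (B x))"
      using A0 B0 by (intro sum_nonneg) auto
  qed
  finally show ?thesis by simp
qed

lemma power_sum_sqrt_mult_PiE:
  fixes a b :: "'a \<Rightarrow> real"
  assumes "finite D"
  shows "(\<Sum>y\<in>D. sqrt (a y * b y)) ^ t
    = (\<Sum>x\<in>PiE {..<t} (\<lambda>_. D). sqrt ((\<Prod>s<t. a (x s)) * (\<Prod>s<t. b (x s))))"
proof -
  have "(\<Sum>y\<in>D. sqrt (a y * b y)) ^ t = (\<Prod>s<t. \<Sum>y\<in>D. sqrt (a y * b y))"
    by simp
  also have "\<dots> = (\<Sum>x\<in>PiE {..<t} (\<lambda>_. D). \<Prod>s<t. sqrt (a (x s) * b (x s)))"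
    using assms by (intro prod_sum_PiE) auto
  finally show ?thesis
    by (simp add: real_sqrt_prod real_sqrt_mult prod.distrib)
qed

lemma bhattacharyya_power_le_overlap_PiE:
  fixes a b :: "'a \<Rightarrow> real"
  assumes D: "finite D"
    and a0: "\<And>y. y \<in> D \<Longrightarrow> 0 \<le> a y" and b0: "\<And>y. y \<in> D \<Longrightarrow> 0 \<le> b y"
    and a1: "(\<Sum>y\<in>D. a y) = 1" and b1: "(\<Sum>y\<in>D. b y) = 1"
  shows "(\<Sum>y\<in>D. sqrt (a y * b y)) ^ (2 * t)
    \<le> 2 * (\<Sum>x\<in>PiE {..<t} (\<lambda>_. D). min (\<Prod>s<t. a (x s)) (\<Prod>s<t. b (x s)))"
proof -
  have "(\<Sum>x\<in>PiE {..<t} (\<lambda>_. D). \<Prod>s<t. c (x s)) = 1"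
    if "(\<Sum>y\<in>D. c y) = 1" for c :: "'a \<Rightarrow> real"
    using prod_sum_PiE[of "{..<t}" "\<lambda>_. D" "\<lambda>_. c"] D that by simp
  moreover have "0 \<le> (\<Prod>s<t. c (x s))"
    if "x \<in> PiE {..<t} (\<lambda>_. D)" "\<And>y. y \<in> D \<Longrightarrow> 0 \<le> c y" for c :: "'a \<Rightarrow> real" and x
    using that by (auto intro!: prod_nonneg simp: PiE_iff)
  ultimately show ?thesis
    unfolding power_mult mult.commute[of 2 t] power_sum_sqrt_mult_PiE[OF D]
    using a0 b0 a1 b1 by (intro sum_sqrt_mult_sq_le_overlap) auto
qed

definition cylinder :: "nat \<Rightarrow> (nat \<Rightarrow> 'a) \<Rightarrow> (nat \<Rightarrow> 'a) set" where
  "cylinder t x = {d. \<forall>s<t. d s = x s}"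

definition prefix_determined :: "nat \<Rightarrow> (nat \<Rightarrow> 'a) set \<Rightarrow> bool" where
  "prefix_determined t B \<longleftrightarrow> (\<forall>d d'. (\<forall>s<t. d s = d' s) \<longrightarrow> d \<in> B \<longrightarrow> d' \<in> B)"

lemma space_eq_UNIV_if_sets_borel: "sets G = sets borel \<Longrightarrow> space G = UNIV"
  using sets_eq_imp_space_eq by fastforce

lemma cylinder_eq_prod_emb:
  assumes "space M = UNIV"
  shows "cylinder t x = prod_emb UNIV (\<lambda>_. M) {..<t} (PiE {..<t} (\<lambda>s. {x s}))"
  using assms by (auto simp: cylinder_def prod_emb_def PiE_iff)

lemma cylinder_in_sets_PiM:
  fixes G :: "real measure"
  assumes "sets G = sets borel"
  shows "cylinder t x \<in> sets (PiM UNIV (\<lambda>_. G))"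
  unfolding cylinder_eq_prod_emb[OF space_eq_UNIV_if_sets_borel[OF assms]]
  by (intro measurable_prod_emb sets_PiM_I_finite) (use assms in auto)

lemma measure_PiM_cylinder:
  fixes G :: "real measure"
  assumes "prob_space G" "sets G = sets borel"
  shows "measure (PiM UNIV (\<lambda>_. G)) (cylinder t x) = (\<Prod>s<t. measure G {x s})"
proof -
  interpret prob_space G by fact
  interpret P: prob_space "PiM UNIV (\<lambda>_::nat. G)" by (rule prob_space_PiM) (use assms in auto)
  have "emeasure (PiM UNIV (\<lambda>_. G)) (cylinder t x) = (\<Prod>s<t. emeasure G {x s})"
    unfolding cylinder_eq_prod_emb[OF space_eq_UNIV_if_sets_borel[OF assms(2)]]
    by (rule emeasure_PiM_emb) (use assms in auto)
  then show ?thesis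
    by (simp add: P.emeasure_eq_measure emeasure_eq_measure prod_ennreal prod_nonneg)
qed

lemma disjoint_family_on_cylinder: "disjoint_family_on (cylinder t) (PiE {..<t} (\<lambda>_. D))"
  unfolding disjoint_family_on_def
proof (intro ballI impI)
  fix x y assume xy: "x \<in> PiE {..<t} (\<lambda>_. D)" "y \<in> PiE {..<t} (\<lambda>_. D)" "x \<noteq> y"
  then obtain s where "x s \<noteq> y s" by (auto simp: fun_eq_iff)
  with xy have "s < t" using PiE_arb[of x "{..<t}" "\<lambda>_. D" s] PiE_arb[of y "{..<t}" "\<lambda>_. D" s]
    by (cases "s < t") auto
  with \<open>x s \<noteq> y s\<close> show "cylinder t x \<inter> cylinder t y = {}"
    by (auto simp: cylinder_def)
qed

lemma sum_measure_cylinders_le: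
  fixes G :: "real measure"
  assumes G: "prob_space G" "sets G = sets borel" and D: "finite D"
    and Y: "Y \<subseteq> PiE {..<t} (\<lambda>_. D)" and A: "A \<in> sets (PiM UNIV (\<lambda>_. borel))"
    and sub: "\<And>x. x \<in> Y \<Longrightarrow> cylinder t x \<subseteq> A"
  shows "(\<Sum>x\<in>Y. \<Prod>s<t. measure G {x s}) \<le> measure (PiM UNIV (\<lambda>_. G)) A"
proof -
  interpret P: prob_space "PiM UNIV (\<lambda>_::nat. G)" by (rule prob_space_PiM) (use G in auto)
  have "finite Y" using D Y by (meson finite_PiE finite_lessThan finite_subset)
  have "(\<Sum>x\<in>Y. \<Prod>s<t. measure G {x s}) = (\<Sum>x\<in>Y. measure (PiM UNIV (\<lambda>_. G)) (cylinder t x))"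
    using G by (simp add: measure_PiM_cylinder)
  also have "\<dots> = measure (PiM UNIV (\<lambda>_. G)) (\<Union>x\<in>Y. cylinder t x)"
    using \<open>finite Y\<close> disjoint_family_on_mono[OF Y disjoint_family_on_cylinder]
      cylinder_in_sets_PiM[OF G(2)]
    by (intro P.finite_measure_finite_Union[symmetric]) auto
  also have "\<dots> \<le> measure (PiM UNIV (\<lambda>_. G)) A"
    using A sub sets_PiM_cong[of UNIV UNIV "\<lambda>_. G" "\<lambda>_. borel"] G
    by (intro P.finite_measure_mono) auto
  finally show ?thesis .
qed

lemma overlap_PiE_le_test_errors:
  fixes G1 G2 :: "real measure"
  assumes G1: "prob_space G1" "sets G1 = sets borel" and G2: "prob_space G2" "sets G2 = sets borel"
    and D: "finite D" and B: "B \<in> sets (PiM UNIV (\<lambda>_. borel))" "prefix_determined t B"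
  shows "(\<Sum>x\<in>PiE {..<t} (\<lambda>_. D). min (\<Prod>s<t. measure G1 {x s}) (\<Prod>s<t. measure G2 {x s}))
    \<le> measure (PiM UNIV (\<lambda>_. G1)) B + measure (PiM UNIV (\<lambda>_. G2)) (UNIV - B)"
proof -
  define X where "X = PiE {..<t} (\<lambda>_::nat. D)"
  define X1 where "X1 = {x\<in>X. cylinder t x \<subseteq> B}"
  have "finite X" unfolding X_def using D by (simp add: finite_PiE)
  have compl: "cylinder t x \<subseteq> UNIV - B" if "x \<in> X - X1" for x
  proof
    fix d assume d: "d \<in> cylinder t x"
    from that obtain d' where d': "d' \<in> cylinder t x" "d' \<notin> B" unfolding X1_def by blast
    have "\<forall>s<t. d s = d' s" using d d' unfolding cylinder_def by simp
    with d'(2) B(2) show "d \<in> UNIV - B" unfolding prefix_determined_def by blast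
  qed
  have "UNIV - B \<in> sets (PiM UNIV (\<lambda>_::nat. borel))"
    using B(1) sets.compl_sets[of B "PiM UNIV (\<lambda>_::nat. borel)"] by (simp add: space_PiM)
  then have "(\<Sum>x\<in>X - X1. \<Prod>s<t. measure G2 {x s}) \<le> measure (PiM UNIV (\<lambda>_. G2)) (UNIV - B)"
    using G2 D compl unfolding X_def by (intro sum_measure_cylinders_le) auto
  moreover have "(\<Sum>x\<in>X1. \<Prod>s<t. measure G1 {x s}) \<le> measure (PiM UNIV (\<lambda>_. G1)) B"
    using G1 D B(1) unfolding X_def X1_def by (intro sum_measure_cylinders_le) auto
  moreover have "(\<Sum>x\<in>X. min (\<Prod>s<t. measure G1 {x s}) (\<Prod>s<t. measure G2 {x s}))
      \<le> (\<Sum>x\<in>X1. \<Prod>s<t. measure G1 {x s}) + (\<Sum>x\<in>X - X1. \<Prod>s<t. measure G2 {x s})"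
  proof -
    have "(\<Sum>x\<in>X. min (\<Prod>s<t. measure G1 {x s}) (\<Prod>s<t. measure G2 {x s}))
      = (\<Sum>x\<in>X - X1. min (\<Prod>s<t. measure G1 {x s}) (\<Prod>s<t. measure G2 {x s}))
        + (\<Sum>x\<in>X1. min (\<Prod>s<t. measure G1 {x s}) (\<Prod>s<t. measure G2 {x s}))"
      by (rule sum.subset_diff) (auto simp: X1_def \<open>finite X\<close>)
    also have "\<dots> \<le> (\<Sum>x\<in>X - X1. \<Prod>s<t. measure G2 {x s}) + (\<Sum>x\<in>X1. \<Prod>s<t. measure G1 {x s})"
      by (intro add_mono sum_mono min.cobounded1 min.cobounded2)
    finally show ?thesis by simp
  qed
  ultimately show ?thesis unfolding X_def by linarith
qed

lemma sets_env:
  assumes "sets G = sets borel"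
  shows "sets (env G) = sets (borel \<Otimes>\<^sub>M PiM UNIV (\<lambda>_::nat. borel))"
  unfolding env_def using assms by (intro sets_pair_measure_cong sets_PiM_cong) auto

lemma admissible_strategy_nonneg: "admissible_strategy \<pi> \<Longrightarrow> 0 \<le> \<pi> t \<omega>"
  unfolding admissible_strategy_def by (cases \<omega>) auto

lemma admissible_strategy_prefix_eq:
  "admissible_strategy \<pi> \<Longrightarrow> \<forall>s<t. d s = d' s \<Longrightarrow> \<pi> t (u, d) = \<pi> t (u, d')"
  unfolding admissible_strategy_def by blast

lemma bid_events_in_sets:
  assumes "admissible_strategy \<pi>"
  shows "{\<omega>. h \<le> \<pi> t \<omega>} \<in> sets (borel \<Otimes>\<^sub>M PiM UNIV (\<lambda>_::nat. borel))"
    and "{\<omega>. \<pi> t \<omega> < h} \<in> sets (borel \<Otimes>\<^sub>M PiM UNIV (\<lambda>_::nat. borel))"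
proof -
  have m: "\<pi> t \<in> borel_measurable (borel \<Otimes>\<^sub>M PiM UNIV (\<lambda>_::nat. borel))"
    using assms unfolding admissible_strategy_def by blast
  show "{\<omega>. h \<le> \<pi> t \<omega>} \<in> sets (borel \<Otimes>\<^sub>M PiM UNIV (\<lambda>_::nat. borel))"
    and "{\<omega>. \<pi> t \<omega> < h} \<in> sets (borel \<Otimes>\<^sub>M PiM UNIV (\<lambda>_::nat. borel))"
    using borel_measurable_le[OF measurable_const m] borel_measurable_less[OF m measurable_const]
    by (simp_all add: space_pair_measure space_PiM)
qed

text \<open>Conditioned on the random seed u, the event that the bid of round t is at least h
  is a test that only looks at the first t competing bids.\<close>
lemma env_test_errors_ge:
  fixes G1 G2 :: "real measure"
  assumes adm: "admissible_strategy \<pi>"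
    and G1: "prob_space G1" "sets G1 = sets borel" and G2: "prob_space G2" "sets G2 = sets borel"
    and test: "\<And>B. B \<in> sets (PiM UNIV (\<lambda>_. borel)) \<Longrightarrow> prefix_determined t B \<Longrightarrow>
                 L \<le> measure (PiM UNIV (\<lambda>_. G1)) B + measure (PiM UNIV (\<lambda>_. G2)) (UNIV - B)"
  shows "ennreal L \<le> emeasure (env G1) {\<omega>. h \<le> \<pi> t \<omega>} + emeasure (env G2) {\<omega>. \<pi> t \<omega> < h}"
proof -
  define U where "U = uniform_measure lborel {0..1::real}"
  define Q1 where "Q1 = PiM UNIV (\<lambda>_::nat. G1)"
  define Q2 where "Q2 = PiM UNIV (\<lambda>_::nat. G2)"
  define A1 where "A1 = {\<omega>. h \<le> \<pi> t \<omega>}"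
  define A2 where "A2 = {\<omega>. \<pi> t \<omega> < h}"
  interpret U: prob_space U unfolding U_def by (rule prob_space_uniform_measure) auto
  interpret Q1: prob_space Q1 unfolding Q1_def by (rule prob_space_PiM) (use G1 in auto)
  interpret Q2: prob_space Q2 unfolding Q2_def by (rule prob_space_PiM) (use G2 in auto)
  have env: "env G1 = U \<Otimes>\<^sub>M Q1" "env G2 = U \<Otimes>\<^sub>M Q2"
    unfolding env_def U_def Q1_def Q2_def by simp_all
  have A: "A1 \<in> sets (U \<Otimes>\<^sub>M Q1)" "A2 \<in> sets (U \<Otimes>\<^sub>M Q2)"
    using bid_events_in_sets[OF adm] sets_env[OF G1(2)] sets_env[OF G2(2)]
    unfolding A1_def A2_def env[symmetric] by auto
  have pointwise: "ennreal L \<le> emeasure Q1 (Pair u -` A1) + emeasure Q2 (Pair u -` A2)" for u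
  proof -
    define B where "B = Pair u -` A1"
    have "B \<in> sets (PiM UNIV (\<lambda>_. borel))"
      unfolding B_def A1_def by (rule sets_Pair1[OF bid_events_in_sets(1)[OF adm]])
    moreover have "prefix_determined t B"
      using admissible_strategy_prefix_eq[OF adm]
      unfolding prefix_determined_def B_def A1_def by (simp add: vimage_def) (metis)
    ultimately have "L \<le> measure Q1 B + measure Q2 (UNIV - B)"
      unfolding Q1_def Q2_def by (rule test)
    moreover have "Pair u -` A2 = UNIV - B" unfolding B_def A1_def A2_def by auto
    ultimately show ?thesis
      by (simp add: B_def Q1.emeasure_eq_measure Q2.emeasure_eq_measure ennreal_plus[symmetric]
          del: ennreal_plus)
  qed
  have "ennreal L = (\<integral>\<^sup>+u. ennreal L \<partial>U)"
    by (simp add: U.emeasure_space_1)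
  also have "\<dots> \<le> (\<integral>\<^sup>+u. emeasure Q1 (Pair u -` A1) + emeasure Q2 (Pair u -` A2) \<partial>U)"
    by (intro nn_integral_mono pointwise)
  also have "\<dots> = emeasure (U \<Otimes>\<^sub>M Q1) A1 + emeasure (U \<Otimes>\<^sub>M Q2) A2"
    using A by (simp add: nn_integral_add Q1.measurable_emeasure_Pair Q2.measurable_emeasure_Pair
        Q1.emeasure_pair_measure_alt Q2.emeasure_pair_measure_alt)
  finally show ?thesis unfolding env A1_def A2_def .
qed

lemma le_cam_env:
  fixes G1 G2 :: "real measure"
  assumes adm: "admissible_strategy \<pi>"
    and G1: "prob_space G1" "sets G1 = sets borel" and G2: "prob_space G2" "sets G2 = sets borel"
    and D: "finite D" "(\<Sum>y\<in>D. measure G1 {y}) = 1" "(\<Sum>y\<in>D. measure G2 {y}) = 1"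
  shows "ennreal ((\<Sum>y\<in>D. sqrt (measure G1 {y} * measure G2 {y})) ^ (2 * t) / 2)
    \<le> emeasure (env G1) {\<omega>. h \<le> \<pi> t \<omega>} + emeasure (env G2) {\<omega>. \<pi> t \<omega> < h}"
proof (rule env_test_errors_ge[OF adm G1 G2])
  fix B :: "(nat \<Rightarrow> real) set"
  assume "B \<in> sets (PiM UNIV (\<lambda>_. borel))" "prefix_determined t B"
  with G1 G2 D have "(\<Sum>x\<in>PiE {..<t} (\<lambda>_. D). min (\<Prod>s<t. measure G1 {x s}) (\<Prod>s<t. measure G2 {x s}))
    \<le> measure (PiM UNIV (\<lambda>_. G1)) B + measure (PiM UNIV (\<lambda>_. G2)) (UNIV - B)"
    by (intro overlap_PiE_le_test_errors)
  moreover have "(\<Sum>y\<in>D. sqrt (measure G1 {y} * measure G2 {y})) ^ (2 * t)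
    \<le> 2 * (\<Sum>x\<in>PiE {..<t} (\<lambda>_. D). min (\<Prod>s<t. measure G1 {x s}) (\<Prod>s<t. measure G2 {x s}))"
    using D by (intro bhattacharyya_power_le_overlap_PiE) auto
  ultimately show "(\<Sum>y\<in>D. sqrt (measure G1 {y} * measure G2 {y})) ^ (2 * t) / 2
    \<le> measure (PiM UNIV (\<lambda>_. G1)) B + measure (PiM UNIV (\<lambda>_. G2)) (UNIV - B)"
    by linarith
qed

definition two_point :: "real \<Rightarrow> real measure" where
  "two_point p = distr (measure_pmf (bernoulli_pmf p)) borel (\<lambda>b. if b then 0 else 1/2)"

lemma prob_space_two_point: "prob_space (two_point p)"
  unfolding two_point_def
  by (rule prob_space.prob_space_distr) (auto simp: measure_pmf.prob_space_axioms)

lemma sets_two_point [simp]: "sets (two_point p) = sets borel"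
  unfolding two_point_def by simp

lemma measure_two_point:
  assumes "0 \<le> p" "p \<le> 1" "A \<in> sets borel"
  shows "measure (two_point p) A = (if 0 \<in> A then p else 0) + (if 1/2 \<in> A then 1 - p else 0)"
proof -
  let ?f = "\<lambda>b. if b then 0 else 1/2 :: real"
  have "measure (two_point p) A = measure (measure_pmf (bernoulli_pmf p)) (?f -` A)"
    unfolding two_point_def using assms(3) by (subst measure_distr) auto
  also have "?f -` A = (if 0 \<in> A then {True} else {}) \<union> (if 1/2 \<in> A then {False} else {})"
    by (auto split: if_splits)
  finally show ?thesis
    using assms by (simp add: measure_measure_pmf_finite)
qed

lemma two_point_in_comp_dists: "0 \<le> p \<Longrightarrow> p \<le> 1 \<Longrightarrow> two_point p \<in> comp_dists"
  unfolding comp_dists_def by (simp add: prob_space_two_point measure_two_point)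

lemma cdfG_two_point:
  "0 \<le> p \<Longrightarrow> p \<le> 1 \<Longrightarrow> cdfG (two_point p) y = (if y < 0 then 0 else if y < 1/2 then p else 1)"
  unfolding cdfG_def by (simp add: measure_two_point)

lemma rew_two_point_low:
  assumes p: "0 \<le> p" "p \<le> 1" and b: "0 \<le> b" "b < 1/2"
  shows "rew (two_point p) 1 b \<alpha> = p - (1 - \<alpha>) * p * b"
proof -
  have "((\<lambda>y. p) has_integral (b * p)) {0..b}"
    using has_integral_const_real[of p 0 b] b by (simp add: mult.commute)
  then have "((\<lambda>y. cdfG (two_point p) y) has_integral (b * p)) {0..b}"
    by (rule has_integral_eq[rotated]) (use b in \<open>auto simp: cdfG_two_point[OF p]\<close>)
  then show ?thesis
    using b by (simp add: rew_def integral_unique cdfG_two_point[OF p] algebra_simps)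
qed

lemma rew_two_point_high:
  assumes p: "0 \<le> p" "p \<le> 1" and b: "1/2 \<le> b"
  shows "rew (two_point p) 1 b \<alpha> = 1/2 + \<alpha> * p / 2 - (1 - \<alpha>) * (b - 1/2)"
proof -
  have "((\<lambda>y. p) has_integral (p/2)) {0..1/2::real}"
    using has_integral_const_real[of p 0 "1/2"] by simp
  then have "((\<lambda>y. cdfG (two_point p) y) has_integral (p/2)) {0..1/2}"
    by (rule has_integral_spike_finite[where S = "{1/2}", rotated 2])
      (auto simp: cdfG_two_point[OF p])
  moreover have "((\<lambda>y. 1) has_integral (b - 1/2)) {1/2..b}"
    using has_integral_const_real[of "1::real" "1/2" b] b by simp
  then have "((\<lambda>y. cdfG (two_point p) y) has_integral (b - 1/2)) {1/2..b}"
    by (rule has_integral_eq[rotated]) (auto simp: cdfG_two_point[OF p])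
  ultimately have I: "integral {0..b} (\<lambda>y. cdfG (two_point p) y) = p/2 + (b - 1/2)"
    using b by (intro integral_unique has_integral_combine) auto
  have "cdfG (two_point p) b = 1"
    using b by (simp add: cdfG_two_point[OF p])
  then show ?thesis
    unfolding rew_def I by (simp add: field_simps)
qed

lemma bstar_eqI:
  assumes "0 \<le> b\<^sub>0" and "\<And>b. 0 \<le> b \<Longrightarrow> b \<noteq> b\<^sub>0 \<Longrightarrow> rew G v b \<alpha> < rew G v b\<^sub>0 \<alpha>"
  shows "bstar G v \<alpha> = b\<^sub>0"
  unfolding bstar_def
proof (rule Greatest_equality)
  show "0 \<le> b\<^sub>0 \<and> (\<forall>b\<ge>0. rew G v b \<alpha> \<le> rew G v b\<^sub>0 \<alpha>)"
    using assms by (metis order.strict_implies_order order_refl)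
  show "b \<le> b\<^sub>0" if "0 \<le> b \<and> (\<forall>b'\<ge>0. rew G v b' \<alpha> \<le> rew G v b \<alpha>)" for b
    using that assms by (metis not_less order_refl)
qed

definition indifference_prob :: "real \<Rightarrow> real" where
  "indifference_prob \<alpha> = 1 / (2 - \<alpha>)"

lemma indifference_prob_bounds:
  assumes "0 \<le> \<alpha>" "\<alpha> < 1"
  shows "1/2 \<le> indifference_prob \<alpha>" "indifference_prob \<alpha> \<le> 1"
    and "(1 - \<alpha>) / 2 \<le> 1 - indifference_prob \<alpha>"
  using assms mult_left_le_one_le[of \<alpha> \<alpha>] by (simp_all add: indifference_prob_def field_simps)

lemma indifference_prob_diff:
  assumes "\<alpha> < 2"
  shows "p - (1/2 + \<alpha> * p / 2) = (2 - \<alpha>) / 2 * (p - indifference_prob \<alpha>)"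
  using assms by (simp add: indifference_prob_def field_simps)

lemma rew_gap_two_point_above:
  assumes \<alpha>: "0 \<le> \<alpha>" "\<alpha> < 1" and p: "indifference_prob \<alpha> < p" "p \<le> 1" and b: "1/2 \<le> b"
  shows "(p - indifference_prob \<alpha>) / 2 \<le> rew (two_point p) 1 0 \<alpha> - rew (two_point p) 1 b \<alpha>"
proof -
  have "0 \<le> p" using p indifference_prob_bounds[OF \<alpha>] by linarith
  have "(p - indifference_prob \<alpha>) / 2 \<le> (2 - \<alpha>) / 2 * (p - indifference_prob \<alpha>)"
    using \<alpha> p mult_right_mono[of "1/2" "(2 - \<alpha>) / 2" "p - indifference_prob \<alpha>"] by simp
  moreover have "0 \<le> (1 - \<alpha>) * (b - 1/2)" using \<alpha> b by simp
  moreover have "rew (two_point p) 1 0 \<alpha> - rew (two_point p) 1 b \<alpha>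
      = p - (1/2 + \<alpha> * p / 2) + (1 - \<alpha>) * (b - 1/2)"
    using \<open>0 \<le> p\<close> p b by (simp add: rew_two_point_low rew_two_point_high)
  moreover have "\<alpha> < 2" using \<alpha> by simp
  ultimately show ?thesis
    using indifference_prob_diff[of \<alpha> p] by linarith
qed

lemma bstar_two_point_above:
  assumes \<alpha>: "0 \<le> \<alpha>" "\<alpha> < 1" and p: "indifference_prob \<alpha> < p" "p \<le> 1"
  shows "bstar (two_point p) 1 \<alpha> = 0"
proof (rule bstar_eqI)
  have "0 < p" using p indifference_prob_bounds[OF \<alpha>] by linarith
  fix b :: real assume "0 \<le> b" "b \<noteq> 0"
  show "rew (two_point p) 1 b \<alpha> < rew (two_point p) 1 0 \<alpha>"
  proof (cases "b < 1/2")
    case True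
    with \<open>0 < p\<close> p \<alpha> \<open>0 \<le> b\<close> \<open>b \<noteq> 0\<close> show ?thesis by (simp add: rew_two_point_low)
  next
    case False
    with rew_gap_two_point_above[OF \<alpha> p, of b] p show ?thesis by simp
  qed
qed simp

lemma rew_gap_two_point_below:
  assumes \<alpha>: "0 \<le> \<alpha>" "\<alpha> < 1" and p: "0 \<le> p" "p < indifference_prob \<alpha>"
    and b: "0 \<le> b" "b < 1/2"
  shows "(indifference_prob \<alpha> - p) / 2 \<le> rew (two_point p) 1 (1/2) \<alpha> - rew (two_point p) 1 b \<alpha>"
proof -
  have "p \<le> 1" using p indifference_prob_bounds[OF \<alpha>] by linarith
  have "(indifference_prob \<alpha> - p) / 2 \<le> (2 - \<alpha>) / 2 * (indifference_prob \<alpha> - p)"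
    using \<alpha> p mult_right_mono[of "1/2" "(2 - \<alpha>) / 2" "indifference_prob \<alpha> - p"] by simp
  moreover have "0 \<le> (1 - \<alpha>) * p * b" using \<alpha> p b by simp
  moreover have "rew (two_point p) 1 (1/2) \<alpha> - rew (two_point p) 1 b \<alpha>
      = - (p - (1/2 + \<alpha> * p / 2)) + (1 - \<alpha>) * p * b"
    using \<open>p \<le> 1\<close> p b by (simp add: rew_two_point_low rew_two_point_high)
  moreover have "\<alpha> < 2" using \<alpha> by simp
  moreover have "(2 - \<alpha>) / 2 * (indifference_prob \<alpha> - p) = - ((2 - \<alpha>) / 2 * (p - indifference_prob \<alpha>))"
    by (simp add: right_diff_distrib)
  ultimately show ?thesis
    using indifference_prob_diff[of \<alpha> p] by linarith
qed

lemma bstar_two_point_below: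
  assumes \<alpha>: "0 \<le> \<alpha>" "\<alpha> < 1" and p: "0 \<le> p" "p < indifference_prob \<alpha>"
  shows "bstar (two_point p) 1 \<alpha> = 1/2"
proof (rule bstar_eqI)
  have "p \<le> 1" using p indifference_prob_bounds[OF \<alpha>] by linarith
  fix b :: real assume "0 \<le> b" "b \<noteq> 1/2"
  show "rew (two_point p) 1 b \<alpha> < rew (two_point p) 1 (1/2) \<alpha>"
  proof (cases "b < 1/2")
    case True
    with rew_gap_two_point_below[OF \<alpha> p \<open>0 \<le> b\<close>] p show ?thesis by simp
  next
    case False
    with \<open>b \<noteq> 1/2\<close> \<alpha> p \<open>p \<le> 1\<close> show ?thesis by (simp add: rew_two_point_high)
  qed
qed simp

lemma regret_ge_sum_gap_emeasure:
  assumes A: "\<And>t. A t \<in> sets (env G)"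
    and gap: "\<And>t \<omega>. \<omega> \<in> A t \<Longrightarrow> \<delta> \<le> rew G 1 (bstar G 1 \<alpha>) \<alpha> - rew G 1 (\<pi> t \<omega>) \<alpha>"
  shows "(\<Sum>t<T. ennreal \<delta> * emeasure (env G) (A t)) \<le> regret \<pi> G \<alpha> T"
  unfolding regret_def
proof (rule sum_mono)
  fix t
  have "ennreal \<delta> * emeasure (env G) (A t) = (\<integral>\<^sup>+\<omega>. ennreal \<delta> * indicator (A t) \<omega> \<partial>env G)"
    using A by (simp add: nn_integral_cmult_indicator)
  also have "\<dots> \<le> (\<integral>\<^sup>+\<omega>. ennreal (rew G 1 (bstar G 1 \<alpha>) \<alpha> - rew G 1 (\<pi> t \<omega>) \<alpha>) \<partial>env G)"
    using gap by (intro nn_integral_mono) (auto split: split_indicator intro: ennreal_leI)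
  finally show "ennreal \<delta> * emeasure (env G) (A t)
    \<le> (\<integral>\<^sup>+\<omega>. ennreal (rew G 1 (bstar G 1 \<alpha>) \<alpha> - rew G 1 (\<pi> t \<omega>) \<alpha>) \<partial>env G)" .
qed

lemma bid_events_in_sets_env:
  assumes "admissible_strategy \<pi>" "sets G = sets borel"
  shows "{\<omega>. h \<le> \<pi> t \<omega>} \<in> sets (env G)" "{\<omega>. \<pi> t \<omega> < h} \<in> sets (env G)"
  using bid_events_in_sets[OF assms(1)] sets_env[OF assms(2)] by simp_all

lemma regret_two_point_above:
  assumes adm: "admissible_strategy \<pi>" and \<alpha>: "0 \<le> \<alpha>" "\<alpha> < 1"
    and p: "indifference_prob \<alpha> < p" "p \<le> 1"
  shows "(\<Sum>t<T. ennreal ((p - indifference_prob \<alpha>) / 2) * emeasure (env (two_point p)) {\<omega>. 1/2 \<le> \<pi> t \<omega>})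
    \<le> regret \<pi> (two_point p) \<alpha> T"
proof (rule regret_ge_sum_gap_emeasure)
  show "{\<omega>. 1/2 \<le> \<pi> t \<omega>} \<in> sets (env (two_point p))" for t
    by (rule bid_events_in_sets_env(1)[OF adm sets_two_point])
  show "(p - indifference_prob \<alpha>) / 2
      \<le> rew (two_point p) 1 (bstar (two_point p) 1 \<alpha>) \<alpha> - rew (two_point p) 1 (\<pi> t \<omega>) \<alpha>"
    if "\<omega> \<in> {\<omega>. 1/2 \<le> \<pi> t \<omega>}" for t \<omega>
    unfolding bstar_two_point_above[OF \<alpha> p]
    using that rew_gap_two_point_above[OF \<alpha> p] by simp
qed

lemma regret_two_point_below:
  assumes adm: "admissible_strategy \<pi>" and \<alpha>: "0 \<le> \<alpha>" "\<alpha> < 1"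
    and p: "0 \<le> p" "p < indifference_prob \<alpha>"
  shows "(\<Sum>t<T. ennreal ((indifference_prob \<alpha> - p) / 2) * emeasure (env (two_point p)) {\<omega>. \<pi> t \<omega> < 1/2})
    \<le> regret \<pi> (two_point p) \<alpha> T"
proof (rule regret_ge_sum_gap_emeasure)
  show "{\<omega>. \<pi> t \<omega> < 1/2} \<in> sets (env (two_point p))" for t
    by (rule bid_events_in_sets_env(2)[OF adm sets_two_point])
  show "(indifference_prob \<alpha> - p) / 2
      \<le> rew (two_point p) 1 (bstar (two_point p) 1 \<alpha>) \<alpha> - rew (two_point p) 1 (\<pi> t \<omega>) \<alpha>"
    if "\<omega> \<in> {\<omega>. \<pi> t \<omega> < 1/2}" for t \<omega>
    unfolding bstar_two_point_below[OF \<alpha> p]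
    using that rew_gap_two_point_below[OF \<alpha> p admissible_strategy_nonneg[OF adm]] by simp
qed

lemma two_point_test_errors_ge:
  assumes adm: "admissible_strategy \<pi>" and p: "0 \<le> p" "p \<le> 1" and q: "0 \<le> q" "q \<le> 1"
  shows "ennreal ((sqrt (p * q) + sqrt ((1 - p) * (1 - q))) ^ (2 * t) / 2)
    \<le> emeasure (env (two_point p)) {\<omega>. 1/2 \<le> \<pi> t \<omega>} + emeasure (env (two_point q)) {\<omega>. \<pi> t \<omega> < 1/2}"
proof -
  have "measure (two_point r) {0} = r" "measure (two_point r) {1/2} = 1 - r"
    if "0 \<le> r" "r \<le> 1" for r
    using that by (simp_all add: measure_two_point)
  with p q show ?thesis
    using le_cam_env[OF adm prob_space_two_point sets_two_point prob_space_two_point sets_two_point,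
        of "{0, 1/2}" p q t "1/2"]
    by simp
qed

lemma sqrt_mult_add_diff_ge:
  fixes x e :: real
  assumes "0 \<le> e" "e \<le> x" "0 < x"
  shows "x - e\<^sup>2 / x \<le> sqrt ((x + e) * (x - e))"
proof (rule real_le_rsqrt)
  define r where "r = e\<^sup>2 / x"
  have "r * x = e\<^sup>2" "0 \<le> r" "r \<le> x"
    using assms by (auto simp: r_def divide_le_eq power2_eq_square mult_mono)
  then have "r * r \<le> e\<^sup>2" by (metis mult_left_mono)
  then show "(x - r)\<^sup>2 \<le> (x + e) * (x - e)"
    using \<open>r * x = e\<^sup>2\<close> by (simp add: power2_eq_square algebra_simps)
qed

lemma bhattacharyya_two_point_ge:
  fixes p \<epsilon> :: real
  assumes "0 \<le> \<epsilon>" "\<epsilon> \<le> p" "\<epsilon> \<le> 1 - p" "0 < p" "p < 1"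
  shows "1 - \<epsilon>\<^sup>2 / p - \<epsilon>\<^sup>2 / (1 - p)
    \<le> sqrt ((p + \<epsilon>) * (p - \<epsilon>)) + sqrt ((1 - (p + \<epsilon>)) * (1 - (p - \<epsilon>)))"
proof -
  have "(1 - (p + \<epsilon>)) * (1 - (p - \<epsilon>)) = ((1 - p) + \<epsilon>) * ((1 - p) - \<epsilon>)"
    by (simp add: algebra_simps)
  then show ?thesis
    using sqrt_mult_add_diff_ge[of \<epsilon> p] sqrt_mult_add_diff_ge[of \<epsilon> "1 - p"] assms by simp
qed

lemma power_ge_half_if_near_one:
  fixes \<rho> :: real
  assumes "0 \<le> \<rho>" "1 - \<rho> \<le> 1 / (16 * real T)" "t < T"
  shows "1/2 \<le> \<rho> ^ (2 * t)"
proof (cases "\<rho> \<le> 1")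
  case True
  have "1 - real (2 * t) * (1 - \<rho>) \<le> \<rho> ^ (2 * t)"
    using Bernoulli_inequality[of "\<rho> - 1" "2 * t"] assms(1) by (simp add: algebra_simps)
  moreover have "real (2 * t) * (1 - \<rho>) \<le> real (2 * T) * (1 / (16 * real T))"
    using assms True by (intro mult_mono) auto
  moreover have "real (2 * T) * (1 / (16 * real T)) = 1/8"
    using assms by simp
  ultimately show ?thesis by linarith
next
  case False
  then have "1 \<le> \<rho> ^ (2 * t)" by (simp add: one_le_power)
  then show ?thesis by simp
qed

lemma perturbation_bounds:
  fixes \<alpha> :: real and T :: nat
  assumes \<alpha>: "0 \<le> \<alpha>" "\<alpha> < 1" and T: "0 < T"
  defines "p \<equiv> indifference_prob \<alpha>" and "\<epsilon> \<equiv> (1 - \<alpha>) / (8 * sqrt (real T))"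
  shows "0 < \<epsilon>" "\<epsilon> \<le> p" "\<epsilon> \<le> 1 - p" "0 < p" "p < 1"
    and "\<epsilon>\<^sup>2 / p + \<epsilon>\<^sup>2 / (1 - p) \<le> 1 / (16 * real T)"
proof -
  note p_bounds = indifference_prob_bounds[OF \<alpha>, folded p_def]
  have "1 \<le> sqrt (real T)" using T by simp
  then show "0 < \<epsilon>" unfolding \<epsilon>_def using \<alpha> by simp
  have "\<epsilon> \<le> (1 - \<alpha>) / 8"
    unfolding \<epsilon>_def using \<alpha> \<open>1 \<le> sqrt (real T)\<close> by (intro divide_left_mono) auto
  then show "\<epsilon> \<le> p" "\<epsilon> \<le> 1 - p" "0 < p" "p < 1"
    using p_bounds \<alpha> by auto
  have \<epsilon>_sq: "\<epsilon>\<^sup>2 = (1 - \<alpha>)\<^sup>2 / (64 * real T)"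
    unfolding \<epsilon>_def by (simp add: power_divide power_mult_distrib)
  have "\<epsilon>\<^sup>2 / p \<le> \<epsilon>\<^sup>2 / (1/2)"
    using p_bounds by (intro divide_left_mono) auto
  also have "\<dots> \<le> 1 / (32 * real T)"
    unfolding \<epsilon>_sq using \<alpha> T by (simp add: field_simps power_le_one)
  finally have "\<epsilon>\<^sup>2 / p \<le> 1 / (32 * real T)" .
  moreover have "\<epsilon>\<^sup>2 / (1 - p) \<le> \<epsilon>\<^sup>2 / ((1 - \<alpha>) / 2)"
    using p_bounds \<alpha> by (intro divide_left_mono) auto
  moreover have "\<epsilon>\<^sup>2 / ((1 - \<alpha>) / 2) = (1 - \<alpha>) / (32 * real T)"
  proof -
    have "\<epsilon>\<^sup>2 = (1 - \<alpha>) / (32 * real T) * ((1 - \<alpha>) / 2)"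
      unfolding \<epsilon>_sq by (simp add: power2_eq_square)
    then show ?thesis using \<alpha> by simp
  qed
  moreover have "(1 - \<alpha>) / (32 * real T) \<le> 1 / (32 * real T)"
    using \<alpha> by (intro divide_right_mono) auto
  ultimately show "\<epsilon>\<^sup>2 / p + \<epsilon>\<^sup>2 / (1 - p) \<le> 1 / (16 * real T)"
    by simp
qed

lemma regret_two_point_sum_ge:
  fixes \<alpha> :: real and T :: nat
  assumes adm: "admissible_strategy \<pi>" and \<alpha>: "0 \<le> \<alpha>" "\<alpha> < 1" and T: "0 < T"
  defines "p \<equiv> indifference_prob \<alpha>" and "\<epsilon> \<equiv> (1 - \<alpha>) / (8 * sqrt (real T))"
  shows "ennreal ((1 - \<alpha>) * sqrt (real T) / 64)
    \<le> regret \<pi> (two_point (p + \<epsilon>)) \<alpha> T + regret \<pi> (two_point (p - \<epsilon>)) \<alpha> T"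
proof -
  note params = perturbation_bounds[OF \<alpha> T, folded p_def \<epsilon>_def]
  define \<rho> where "\<rho> = sqrt ((p + \<epsilon>) * (p - \<epsilon>)) + sqrt ((1 - (p + \<epsilon>)) * (1 - (p - \<epsilon>)))"
  define E1 where "E1 t = emeasure (env (two_point (p + \<epsilon>))) {\<omega>. 1/2 \<le> \<pi> t \<omega>}" for t
  define E2 where "E2 t = emeasure (env (two_point (p - \<epsilon>))) {\<omega>. \<pi> t \<omega> < 1/2}" for t
  have "0 \<le> \<rho>"
    unfolding \<rho>_def using params by (intro add_nonneg_nonneg real_sqrt_ge_zero mult_nonneg_nonneg) auto
  moreover have "1 - \<rho> \<le> 1 / (16 * real T)"
    using bhattacharyya_two_point_ge[of \<epsilon> p] params unfolding \<rho>_def by simp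
  ultimately have errors: "ennreal (1/4) \<le> E1 t + E2 t" if "t < T" for t
  proof -
    have "ennreal (1/4) \<le> ennreal (\<rho> ^ (2 * t) / 2)"
      using power_ge_half_if_near_one[OF \<open>0 \<le> \<rho>\<close> _ that] \<open>1 - \<rho> \<le> _\<close> by (intro ennreal_leI) simp
    also have "\<dots> \<le> E1 t + E2 t"
      unfolding E1_def E2_def \<rho>_def using params by (intro two_point_test_errors_ge[OF adm]) auto
    finally show ?thesis .
  qed
  have "real T * \<epsilon> / 8 = (1 - \<alpha>) / 64 * (real T / sqrt (real T))"
    by (simp add: \<epsilon>_def)
  then have "(1 - \<alpha>) * sqrt (real T) / 64 = real T * \<epsilon> / 8"
    by (simp add: real_div_sqrt mult_ac)
  then have "ennreal ((1 - \<alpha>) * sqrt (real T) / 64) = (\<Sum>t<T. ennreal (\<epsilon> / 2) * ennreal (1/4))"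
    using params by (simp add: ennreal_mult[symmetric] ennreal_of_nat_eq_real_of_nat)
  also have "\<dots> \<le> (\<Sum>t<T. ennreal (\<epsilon> / 2) * (E1 t + E2 t))"
    by (intro sum_mono mult_left_mono errors) auto
  also have "\<dots> = (\<Sum>t<T. ennreal ((p + \<epsilon> - p) / 2) * E1 t) + (\<Sum>t<T. ennreal ((p - (p - \<epsilon>)) / 2) * E2 t)"
    by (simp add: distrib_left sum.distrib)
  also have "\<dots> \<le> regret \<pi> (two_point (p + \<epsilon>)) \<alpha> T + regret \<pi> (two_point (p - \<epsilon>)) \<alpha> T"
    using params unfolding E1_def E2_def p_def
    by (intro add_mono regret_two_point_above[OF adm \<alpha>] regret_two_point_below[OF adm \<alpha>]) auto
  finally show ?thesis .
qed

lemma SUP_regret_ge: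
  fixes \<alpha> :: real and T :: nat
  assumes adm: "admissible_strategy \<pi>" and \<alpha>: "0 \<le> \<alpha>" "\<alpha> < 1" and T: "0 < T"
  shows "ennreal ((1 - \<alpha>) * sqrt (real T) / 128) \<le> (SUP G\<in>comp_dists. regret \<pi> G \<alpha> T)"
proof -
  define p where "p = indifference_prob \<alpha>"
  define \<epsilon> where "\<epsilon> = (1 - \<alpha>) / (8 * sqrt (real T))"
  define S where "S = (SUP G\<in>comp_dists. regret \<pi> G \<alpha> T)"
  have S_ge: "regret \<pi> (two_point q) \<alpha> T \<le> S" if "0 \<le> q" "q \<le> 1" for q
    unfolding S_def using that by (intro SUP_upper two_point_in_comp_dists)
  have "2 * ennreal ((1 - \<alpha>) * sqrt (real T) / 128) = ennreal ((1 - \<alpha>) * sqrt (real T) / 64)"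
    using \<alpha> by (simp add: mult_2 ennreal_plus[symmetric] del: ennreal_plus)
  also have "\<dots> \<le> regret \<pi> (two_point (p + \<epsilon>)) \<alpha> T + regret \<pi> (two_point (p - \<epsilon>)) \<alpha> T"
    unfolding p_def \<epsilon>_def by (rule regret_two_point_sum_ge[OF adm \<alpha> T])
  also have "\<dots> \<le> 2 * S"
    using perturbation_bounds[OF \<alpha> T, folded p_def \<epsilon>_def] unfolding mult_2
    by (intro add_mono S_ge) auto
  finally show ?thesis
    unfolding S_def by (subst (asm) ennreal_mult_le_mult_iff) auto
qed

theorem lemma4:
  shows "\<exists>c>0. \<forall>(\<alpha>0::real) (T::nat). 0 \<le> \<alpha>0 \<and> \<alpha>0 \<le> 1 \<longrightarrow>
           ennreal (c * (1 - \<alpha>0) * sqrt (real T))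
             \<le> (INF \<pi>\<in>{\<pi>. admissible_strategy \<pi>}. SUP G\<in>comp_dists. regret \<pi> G \<alpha>0 T)"
proof (intro exI[of _ "1/128"] conjI allI impI)
  fix \<alpha> :: real and T :: nat
  assume \<alpha>: "0 \<le> \<alpha> \<and> \<alpha> \<le> 1"
  show "ennreal (1/128 * (1 - \<alpha>) * sqrt (real T))
    \<le> (INF \<pi>\<in>{\<pi>. admissible_strategy \<pi>}. SUP G\<in>comp_dists. regret \<pi> G \<alpha> T)"
  proof (cases "\<alpha> = 1 \<or> T = 0")
    case False
    with \<alpha> SUP_regret_ge[of _ \<alpha> T] show ?thesis
      by (auto intro!: INF_greatest)
  qed auto
qed simp

end
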